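(* Let $k\ge 1$ be an integer and let $r=R(k,k+1)$ be the Ramsey number (the least $r$ such that every simple graph on at least $r$ vertices contains an independent set of size $k$ or a clique of size $k+1$). Then for every graph $G$ on at least $r$ vertices, $\lambda(G)\ge k$; consequently $\Lambda_n\ge k$ for all $n\ge r$. In particular (since $R(3,4)=9$), $\Lambda_n\ge 3$ for all $n\ge 9$.
   Context: All graphs are finite, simple and undirected. For a graph $G=(V,E)$ and $v\in V$, let $N_v$ be the neighbourhood of $v$; the local complementation $G^v$ is obtained by complementing the subgraph induced on $N_v$. The LC orbit $[G]$ is the set of graphs obtainable from $G$ by finite sequences of local complementations. $\alpha(G)$ is the independence number of $G$, $\lambda(G)=\max_{H\in[G]}\alpha(H)$, and $\Lambda_n$ is the minimum of $\lambda(G)$ over all graphs $G$ on $n$ vertices. *)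

theory Defs
  imports Main
begin

type_synonym 'a graph = "'a set \<times> 'a set set"

definition is_graph :: "'a graph \<Rightarrow> bool" where
  "is_graph G \<longleftrightarrow> finite (fst G) \<and>
     (\<forall>e\<in>snd G. \<exists>x y. x \<noteq> y \<and> x \<in> fst G \<and> y \<in> fst G \<and> e = {x, y})"

definition nbhd :: "'a graph \<Rightarrow> 'a \<Rightarrow> 'a set" where
  "nbhd G v = {u \<in> fst G. {u, v} \<in> snd G}"

definition local_comp :: "'a graph \<Rightarrow> 'a \<Rightarrow> 'a graph" where
  "local_comp G v =
     (fst G, (snd G - {{x, y} | x y. x \<in> nbhd G v \<and> y \<in> nbhd G v \<and> x \<noteq> y})
             \<union> ({{x, y} | x y. x \<in> nbhd G v \<and> y \<in> nbhd G v \<and> x \<noteq> y} - snd G))"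

inductive_set lc_orbit :: "'a graph \<Rightarrow> 'a graph set" for G :: "'a graph" where
  base: "G \<in> lc_orbit G"
| step: "H \<in> lc_orbit G \<Longrightarrow> v \<in> fst H \<Longrightarrow> local_comp H v \<in> lc_orbit G"

definition indep_set :: "'a graph \<Rightarrow> 'a set \<Rightarrow> bool" where
  "indep_set G S \<longleftrightarrow> S \<subseteq> fst G \<and> (\<forall>x\<in>S. \<forall>y\<in>S. {x, y} \<notin> snd G)"

definition clique :: "'a graph \<Rightarrow> 'a set \<Rightarrow> bool" where
  "clique G S \<longleftrightarrow> S \<subseteq> fst G \<and> (\<forall>x\<in>S. \<forall>y\<in>S. x \<noteq> y \<longrightarrow> {x, y} \<in> snd G)"

definition alpha :: "'a graph \<Rightarrow> nat" where
  "alpha G = Max {card S | S. indep_set G S}"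

definition lam :: "'a graph \<Rightarrow> nat" where
  "lam G = Max (alpha ` lc_orbit G)"

definition Lam :: "nat \<Rightarrow> nat" where
  "Lam n = Min {lam G | G :: nat graph. is_graph G \<and> fst G = {..<n}}"

definition ramsey_prop :: "nat \<Rightarrow> nat \<Rightarrow> nat \<Rightarrow> bool" where
  "ramsey_prop k l r \<longleftrightarrow> (\<forall>G :: nat graph. is_graph G \<and> card (fst G) \<ge> r \<longrightarrow>
      (\<exists>S. indep_set G S \<and> card S = k) \<or> (\<exists>S. clique G S \<and> card S = l))"

definition ramsey :: "nat \<Rightarrow> nat \<Rightarrow> nat" where
  "ramsey k l = (LEAST r. ramsey_prop k l r)"

end

theory Submission
  imports Defs
begin

(*
  Local complementation at v turns every clique inside the neighbourhood of v into an independent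
  set and leaves all pairs with an endpoint outside that neighbourhood untouched. Hence a clique C
  gives lambda(G) >= |C| - 1 (complement at a vertex of C), and by Ramsey a graph on at least
  R(k, k+1) vertices has an independent k-set or a (k+1)-clique.

  For n >= 9 we avoid computing R(3,4) and argue around one vertex v. If v has at least
  6 = C(4,2) neighbours, they contain an independent triple or a triangle, and complementing at v
  makes the triangle independent. Otherwise v has a set M of at least 3 non-neighbours: a non-edge
  in M together with v is an independent triple, and if M is a clique then complementing at some
  a in M makes (M - {a}) + v independent.
*)

lemma singleton_notin_edges: "is_graph G \<Longrightarrow> {x} \<notin> snd G"
  unfolding is_graph_def by (auto simp: doubleton_eq_iff)

lemma edges_subset_Pow: "is_graph G \<Longrightarrow> snd G \<subseteq> Pow (fst G)"
  unfolding is_graph_def by auto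

lemma indep_set_insert:
  "indep_set G (insert x S) \<longleftrightarrow>
     x \<in> fst G \<and> {x} \<notin> snd G \<and> (\<forall>y\<in>S. {x, y} \<notin> snd G) \<and> indep_set G S"
  unfolding indep_set_def by (auto simp: insert_commute)

lemma clique_insert:
  "clique G (insert x S) \<longleftrightarrow>
     x \<in> fst G \<and> (\<forall>y\<in>S. y \<noteq> x \<longrightarrow> {x, y} \<in> snd G) \<and> clique G S"
  unfolding clique_def by (auto simp: insert_commute)

lemma fst_local_comp [simp]: "fst (local_comp G v) = fst G"
  by (simp add: local_comp_def)

lemma edge_local_comp_iff:
  "{x, y} \<in> snd (local_comp G v) \<longleftrightarrow>
     (if x \<in> nbhd G v \<and> y \<in> nbhd G v \<and> x \<noteq> y then {x, y} \<notin> snd G else {x, y} \<in> snd G)"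
  unfolding local_comp_def by (auto simp: doubleton_eq_iff)

lemma is_graph_local_comp: "is_graph G \<Longrightarrow> is_graph (local_comp G v)"
  unfolding is_graph_def local_comp_def nbhd_def by auto

lemma local_comp_in_lc_orbit: "v \<in> fst G \<Longrightarrow> local_comp G v \<in> lc_orbit G"
  by (intro lc_orbit.step lc_orbit.base)

lemma fst_lc_orbit: "H \<in> lc_orbit G \<Longrightarrow> fst H = fst G"
  by (induction rule: lc_orbit.induct) auto

lemma is_graph_lc_orbit: "H \<in> lc_orbit G \<Longrightarrow> is_graph G \<Longrightarrow> is_graph H"
  by (induction rule: lc_orbit.induct) (auto intro: is_graph_local_comp)

lemma finite_lc_orbit:
  assumes "is_graph G" shows "finite (lc_orbit G)"
proof (rule finite_subset)
  show "lc_orbit G \<subseteq> {fst G} \<times> Pow (Pow (fst G))"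
  proof
    fix H assume "H \<in> lc_orbit G"
    then have "fst H = fst G" "snd H \<subseteq> Pow (fst G)"
      using fst_lc_orbit is_graph_lc_orbit assms edges_subset_Pow by metis+
    then show "H \<in> {fst G} \<times> Pow (Pow (fst G))" by (simp add: mem_Times_iff)
  qed
  show "finite ({fst G} \<times> Pow (Pow (fst G)))"
    using assms by (simp add: is_graph_def)
qed

lemma card_le_alpha:
  assumes "finite (fst H)" "indep_set H S" shows "card S \<le> alpha H"
proof -
  have "{card S | S. indep_set H S} \<subseteq> card ` Pow (fst H)"
    by (auto simp: indep_set_def)
  then have "finite {card S | S. indep_set H S}"
    using assms(1) finite_subset by blast
  then show ?thesis unfolding alpha_def using assms(2) by (auto intro: Max_ge)
qed

lemma card_le_lam:
  assumes "is_graph G" "H \<in> lc_orbit G" "indep_set H S" shows "card S \<le> lam G"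
proof -
  have "finite (fst H)" using is_graph_lc_orbit[OF assms(2,1)] by (simp add: is_graph_def)
  then have "card S \<le> alpha H" using card_le_alpha assms(3) by blast
  also have "alpha H \<le> lam G" unfolding lam_def
    using finite_lc_orbit[OF assms(1)] assms(2) by (auto intro: Max_ge)
  finally show ?thesis .
qed

lemma indep_set_local_comp:
  assumes G: "is_graph G" and S: "clique G S" "S \<subseteq> nbhd G v"
    and T: "indep_set G T" "T \<inter> nbhd G v = {}"
    and ST: "\<forall>s\<in>S. \<forall>t\<in>T. {s, t} \<notin> snd G"
  shows "indep_set (local_comp G v) (S \<union> T)"
proof -
  have T_edge: "{t, y} \<notin> snd (local_comp G v)" if "t \<in> T" "y \<in> S \<union> T" for t y
  proof -
    have "{t, y} \<notin> snd G"
      using that T(1) ST unfolding indep_set_def by (metis UnE insert_commute)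
    moreover have "t \<notin> nbhd G v" using that T(2) by blast
    ultimately show ?thesis by (simp add: edge_local_comp_iff)
  qed
  have S_edge: "{x, y} \<notin> snd (local_comp G v)" if "x \<in> S" "y \<in> S" for x y
  proof (cases "x = y")
    case True
    then show ?thesis using singleton_notin_edges[OF is_graph_local_comp[OF G]] by simp
  next
    case False
    then have "{x, y} \<in> snd G" using that S(1) by (simp add: clique_def)
    moreover have "x \<in> nbhd G v" "y \<in> nbhd G v" using that S(2) by blast+
    ultimately show ?thesis using False by (simp add: edge_local_comp_iff)
  qed
  have "S \<union> T \<subseteq> fst G"
    using S(1) T(1) by (simp add: clique_def indep_set_def)
  then show ?thesis
    unfolding indep_set_def using T_edge S_edge by (metis UnE insert_commute fst_local_comp)
qed

lemma clique_in_nbhd_card_le_lam: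
  assumes "is_graph G" "v \<in> fst G" "clique G S" "S \<subseteq> nbhd G v"
  shows "card S \<le> lam G"
  using indep_set_local_comp[OF assms(1,3,4), of "{}"]
    card_le_lam[OF assms(1) local_comp_in_lc_orbit[OF assms(2)]]
  by (simp add: indep_set_def)

lemma card_clique_le_Suc_lam:
  assumes G: "is_graph G" and C: "clique G C"
  shows "card C \<le> Suc (lam G)"
proof (cases "C = {}")
  case False
  then obtain v where v: "v \<in> C" by blast
  have "clique G (C - {v})" "C - {v} \<subseteq> nbhd G v" "v \<in> fst G"
    using C v by (auto simp: clique_def nbhd_def insert_commute)
  then have "card (C - {v}) \<le> lam G"
    using clique_in_nbhd_card_le_lam[OF G] by blast
  then show ?thesis using v by (simp add: card_Diff_singleton_if split: if_splits)
qed simp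

lemma clique_insert_adjacent:
  assumes G: "is_graph G" and "x \<in> fst G" "clique G S" "\<forall>y\<in>S. {x, y} \<in> snd G"
  shows "clique G (insert x S)" "card (insert x S) = Suc (card S)"
proof -
  show "clique G (insert x S)" using assms(2-4) by (simp add: clique_insert)
  have "x \<notin> S" using assms(4) singleton_notin_edges[OF G, of x] by auto
  moreover have "finite S" using G assms(3) finite_subset by (auto simp: clique_def is_graph_def)
  ultimately show "card (insert x S) = Suc (card S)" by simp
qed

lemma indep_set_insert_non_adjacent:
  assumes G: "is_graph G" and "x \<in> fst G" "x \<notin> S" "indep_set G S" "\<forall>y\<in>S. {x, y} \<notin> snd G"
  shows "indep_set G (insert x S)" "card (insert x S) = Suc (card S)"
proof -
  show "indep_set G (insert x S)"
    using assms(2,4,5) singleton_notin_edges[OF G] by (simp add: indep_set_insert)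
  have "finite S" using G assms(4) finite_subset by (auto simp: indep_set_def is_graph_def)
  then show "card (insert x S) = Suc (card S)" using assms(3) by simp
qed

lemma le_card_filter_or_le_card_filter_not:
  assumes "finite V" "x \<in> V" "a + b \<le> card V"
  shows "a \<le> card {y \<in> V - {x}. P y} \<or> b \<le> card {y \<in> V - {x}. \<not> P y}"
proof -
  have "card {y \<in> V - {x}. P y} + card {y \<in> V - {x}. \<not> P y} = card (V - {x})"
    using assms(1) by (subst card_Un_disjoint[symmetric]) (auto intro: arg_cong[where f = card])
  also have "\<dots> = card V - 1" using assms(1,2) by simp
  finally show ?thesis using assms(3) by linarith
qed

lemma homogeneous_in_nbrs_extend:
  assumes G: "is_graph G" and "V \<subseteq> fst G" "x \<in> V"
    and "(\<exists>S\<subseteq>{y \<in> V - {x}. {x, y} \<in> snd G}. indep_set G S \<and> card S = m)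
       \<or> (\<exists>S\<subseteq>{y \<in> V - {x}. {x, y} \<in> snd G}. clique G S \<and> card S = n)"
  shows "(\<exists>S\<subseteq>V. indep_set G S \<and> card S = m) \<or> (\<exists>S\<subseteq>V. clique G S \<and> card S = Suc n)"
  using assms(4)
proof (elim disjE exE conjE)
  fix S assume "S \<subseteq> {y \<in> V - {x}. {x, y} \<in> snd G}" "indep_set G S" "card S = m"
  then show ?thesis by blast
next
  fix S assume S: "S \<subseteq> {y \<in> V - {x}. {x, y} \<in> snd G}" "clique G S" "card S = n"
  have "x \<in> fst G" using assms(2,3) by blast
  then have "clique G (insert x S)" "card (insert x S) = Suc n" "insert x S \<subseteq> V"
    using clique_insert_adjacent[OF G _ S(2)] S(1,3) assms(3) by auto
  then show ?thesis by blast
qed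

lemma homogeneous_in_non_nbrs_extend:
  assumes G: "is_graph G" and "V \<subseteq> fst G" "x \<in> V"
    and "(\<exists>S\<subseteq>{y \<in> V - {x}. {x, y} \<notin> snd G}. indep_set G S \<and> card S = m)
       \<or> (\<exists>S\<subseteq>{y \<in> V - {x}. {x, y} \<notin> snd G}. clique G S \<and> card S = n)"
  shows "(\<exists>S\<subseteq>V. indep_set G S \<and> card S = Suc m) \<or> (\<exists>S\<subseteq>V. clique G S \<and> card S = n)"
  using assms(4)
proof (elim disjE exE conjE)
  fix S assume S: "S \<subseteq> {y \<in> V - {x}. {x, y} \<notin> snd G}" "indep_set G S" "card S = m"
  have "x \<in> fst G" "x \<notin> S" using assms(2,3) S(1) by blast+
  then have "indep_set G (insert x S)" "card (insert x S) = Suc m" "insert x S \<subseteq> V"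
    using indep_set_insert_non_adjacent[OF G _ _ S(2)] S(1,3) assms(3) by auto
  then show ?thesis by blast
next
  fix S assume "S \<subseteq> {y \<in> V - {x}. {x, y} \<notin> snd G}" "clique G S" "card S = n"
  then show ?thesis by blast
qed

lemma ramsey_binomial_bound:
  assumes G: "is_graph G" and V: "V \<subseteq> fst G" "(k + l) choose k \<le> card V"
  shows "(\<exists>S\<subseteq>V. indep_set G S \<and> card S = Suc k) \<or> (\<exists>S\<subseteq>V. clique G S \<and> card S = Suc l)"
  using V
proof (induction "k + l" arbitrary: k l V rule: less_induct)
  case less
  have "finite V" using less.prems(1) G finite_subset by (auto simp: is_graph_def)
  moreover have "0 < card V" using less.prems(2) by (metis binomial_eq_0_iff le_add1 not_less gr0I le_0_eq)
  ultimately obtain x where x: "x \<in> V" by (metis card_gt_0_iff ex_in_conv)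
  then have xG: "x \<in> fst G" using less.prems(1) by blast
  consider (k0) "k = 0" | (l0) "l = 0" | (step) k' l' where "k = Suc k'" "l = Suc l'"
    by (meson not0_implies_Suc)
  then show ?case
  proof cases
    case k0
    then show ?thesis using x indep_set_insert_non_adjacent[OF G xG, of "{}"]
      by (intro disjI1 exI[of _ "{x}"]) (auto simp: indep_set_def)
  next
    case l0
    then show ?thesis using x clique_insert_adjacent[OF G xG, of "{}"]
      by (intro disjI2 exI[of _ "{x}"]) (auto simp: clique_def)
  next
    case step
    define A where "A = {y \<in> V - {x}. {x, y} \<in> snd G}"
    define B where "B = {y \<in> V - {x}. {x, y} \<notin> snd G}"
    have AB: "A \<subseteq> fst G" "B \<subseteq> fst G" using less.prems(1) by (auto simp: A_def B_def)
    have "(k + l) choose k = ((k + l') choose k) + ((k' + l) choose k')"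
      using binomial_Suc_Suc[of "k' + l" k'] unfolding step by (simp only: add_Suc add_Suc_right)
    then have "((k + l') choose k) + ((k' + l) choose k') \<le> card V"
      using less.prems(2) by linarith
    then consider "(k + l') choose k \<le> card A" | "(k' + l) choose k' \<le> card B"
      using le_card_filter_or_le_card_filter_not[OF \<open>finite V\<close> x, where P = "\<lambda>y. {x, y} \<in> snd G"]
      unfolding A_def B_def by blast
    then show ?thesis
    proof cases
      case 1
      then show ?thesis
        using less.hyps[OF _ AB(1)] homogeneous_in_nbrs_extend[OF G less.prems(1) x] step
        unfolding A_def by simp
    next
      case 2
      then show ?thesis
        using less.hyps[OF _ AB(2)] homogeneous_in_non_nbrs_extend[OF G less.prems(1) x] step
        unfolding B_def by simp
    qed
  qed
qed

lemma ramsey_prop_binomial: "ramsey_prop (Suc k) (Suc l) ((k + l) choose k)"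
  unfolding ramsey_prop_def using ramsey_binomial_bound[OF _ order_refl] by blast

lemma ramsey_prop_ramsey:
  assumes "1 \<le> k" "1 \<le> l" shows "ramsey_prop k l (ramsey k l)"
proof -
  obtain k' l' where "k = Suc k'" "l = Suc l'"
    using assms by (metis Suc_le_D One_nat_def)
  then show ?thesis
    unfolding ramsey_def using ramsey_prop_binomial by (metis LeastI)
qed

definition map_graph :: "('a \<Rightarrow> 'b) \<Rightarrow> 'a graph \<Rightarrow> 'b graph" where
  "map_graph f G = (f ` fst G, (`) f ` snd G)"

lemma edge_map_graph_iff:
  assumes "is_graph G" "inj_on f (fst G)" "x \<in> fst G" "y \<in> fst G"
  shows "{f x, f y} \<in> snd (map_graph f G) \<longleftrightarrow> {x, y} \<in> snd G"
proof
  assume "{f x, f y} \<in> snd (map_graph f G)"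
  then obtain e where e: "e \<in> snd G" "f ` {x, y} = f ` e" by (auto simp: map_graph_def)
  moreover have "e \<subseteq> fst G" using e(1) edges_subset_Pow[OF assms(1)] by blast
  moreover have "{x, y} \<subseteq> fst G" using assms(3,4) by simp
  ultimately have "{x, y} = e"
    using inj_on_image_eq_iff[OF assms(2)] by metis
  then show "{x, y} \<in> snd G" using e(1) by simp
qed (auto simp: map_graph_def intro!: image_eqI[where x = "{x, y}"])

lemma is_graph_map_graph:
  assumes "is_graph G" "inj_on f (fst G)" shows "is_graph (map_graph f G)"
  using assms unfolding is_graph_def map_graph_def inj_on_def by fastforce

lemma indep_set_map_graph_iff:
  assumes "is_graph G" "inj_on f (fst G)" "S \<subseteq> fst G"
  shows "indep_set (map_graph f G) (f ` S) \<longleftrightarrow> indep_set G S"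
  using assms edge_map_graph_iff[OF assms(1,2)] unfolding indep_set_def
  by (auto simp: map_graph_def subset_iff)

lemma clique_map_graph_iff:
  assumes "is_graph G" "inj_on f (fst G)" "S \<subseteq> fst G"
  shows "clique (map_graph f G) (f ` S) \<longleftrightarrow> clique G S"
  using assms edge_map_graph_iff[OF assms(1,2)] unfolding clique_def
  by (auto simp: map_graph_def subset_iff inj_on_eq_iff[OF assms(2)])

(* ramsey_prop only speaks about graphs on nat; an injective relabelling transfers it to any
   vertex type. *)
lemma ramsey_propD:
  fixes G :: "'a graph"
  assumes "ramsey_prop k l r" "is_graph G" "r \<le> card (fst G)"
  shows "(\<exists>S. indep_set G S \<and> card S = k) \<or> (\<exists>S. clique G S \<and> card S = l)"
proof -
  obtain f :: "'a \<Rightarrow> nat" where f: "inj_on f (fst G)"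
    using assms(2) finite_imp_inj_to_nat_seg[of "fst G"] unfolding is_graph_def by blast
  let ?H = "map_graph f G"
  have "is_graph ?H \<and> r \<le> card (fst ?H)"
    using is_graph_map_graph[OF assms(2) f] card_image[OF f] assms(3) by (simp add: map_graph_def)
  then have "(\<exists>S'. indep_set ?H S' \<and> card S' = k) \<or> (\<exists>S'. clique ?H S' \<and> card S' = l)"
    using assms(1) unfolding ramsey_prop_def by blast
  moreover have "\<exists>S \<subseteq> fst G. S' = f ` S \<and> card S' = card S" if "S' \<subseteq> fst ?H" for S'
    using that subset_imageE card_image inj_on_subset[OF f]
    unfolding map_graph_def by (metis fst_conv)
  ultimately show ?thesis
    using indep_set_map_graph_iff[OF assms(2) f] clique_map_graph_iff[OF assms(2) f]
    unfolding indep_set_def[of ?H] clique_def[of ?H] by metis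
qed

lemma le_lam_if_ramsey_le_card:
  assumes k: "1 \<le> k" and G: "is_graph G" and card_V: "ramsey k (k + 1) \<le> card (fst G)"
  shows "k \<le> lam G"
proof -
  consider S where "indep_set G S" "card S = k" | C where "clique G C" "card C = k + 1"
    using ramsey_propD[OF ramsey_prop_ramsey G card_V] k by auto
  then show ?thesis
  proof cases
    case 1
    then show ?thesis using card_le_lam[OF G lc_orbit.base] by metis
  next
    case 2
    then show ?thesis using card_clique_le_Suc_lam[OF G] by fastforce
  qed
qed

lemma le_LamI:
  assumes "\<And>G :: nat graph. is_graph G \<Longrightarrow> fst G = {..<n} \<Longrightarrow> k \<le> lam G"
  shows "k \<le> Lam n"
proof -
  let ?A = "{G :: nat graph. is_graph G \<and> fst G = {..<n}}"
  have "?A \<subseteq> {{..<n}} \<times> Pow (Pow {..<n})"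
    using edges_subset_Pow by (fastforce simp: mem_Times_iff)
  then have "finite ?A" by (rule finite_subset) simp
  moreover have "({..<n}, {}) \<in> ?A" by (simp add: is_graph_def)
  moreover have "{lam G | G :: nat graph. is_graph G \<and> fst G = {..<n}} = lam ` ?A" by auto
  ultimately show ?thesis unfolding Lam_def using assms by (subst Min_ge_iff) auto
qed

lemma central_binomial_le_card_nbhd_imp_le_lam:
  assumes G: "is_graph G" and v: "v \<in> fst G" and N: "(k + k) choose k \<le> card (nbhd G v)"
  shows "Suc k \<le> lam G"
proof -
  have "nbhd G v \<subseteq> fst G" by (auto simp: nbhd_def)
  then consider S where "indep_set G S" "card S = Suc k"
    | S where "S \<subseteq> nbhd G v" "clique G S" "card S = Suc k"
    using ramsey_binomial_bound[OF G _ N] by blast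
  then show ?thesis
    by cases (use card_le_lam[OF G lc_orbit.base] clique_in_nbhd_card_le_lam[OF G v] in metis)+
qed

lemma three_le_card_non_nbhd_imp_three_le_lam:
  assumes G: "is_graph G" and v: "v \<in> fst G"
    and card_M: "3 \<le> card (fst G - insert v (nbhd G v))"
  shows "3 \<le> lam G"
proof -
  define M where "M = fst G - insert v (nbhd G v)"
  have M_non_adj: "{x, v} \<notin> snd G" "{v, x} \<notin> snd G" if "x \<in> M" for x
  proof -
    show "{x, v} \<notin> snd G" using that by (simp add: M_def nbhd_def)
    then show "{v, x} \<notin> snd G" by (simp add: insert_commute)
  qed
  have M_sub: "M \<subseteq> fst G" "v \<notin> M" by (auto simp: M_def)
  show ?thesis
  proof (cases "clique G M")
    case False
    then obtain x y where xy: "x \<in> M" "y \<in> M" "x \<noteq> y" "{x, y} \<notin> snd G"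
      using M_sub by (auto simp: clique_def)
    moreover have "{y, x} \<notin> snd G" using xy(4) by (simp add: insert_commute)
    ultimately have "indep_set G {v, x, y}"
      using v M_sub M_non_adj[OF xy(1)] M_non_adj[OF xy(2)] singleton_notin_edges[OF G]
      by (auto simp: indep_set_def)
    moreover have "v \<noteq> x" "v \<noteq> y" using xy(1,2) M_sub(2) by blast+
    then have "card {v, x, y} = 3" using xy(3) by simp
    ultimately show ?thesis using card_le_lam[OF G lc_orbit.base] by metis
  next
    case True
    obtain a where a: "a \<in> M"
      using card_M unfolding M_def[symmetric] by (metis all_not_in_conv card.empty not_numeral_le_zero)
    have indep: "indep_set (local_comp G a) ((M - {a}) \<union> {v})"
    proof (rule indep_set_local_comp[OF G])
      show "clique G (M - {a})" using True by (auto simp: clique_def)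
      show "M - {a} \<subseteq> nbhd G a" using True a M_sub by (auto simp: clique_def nbhd_def)
      show "indep_set G {v}" using v singleton_notin_edges[OF G] by (simp add: indep_set_def)
      show "{v} \<inter> nbhd G a = {}" using M_non_adj[OF a] by (auto simp: nbhd_def)
      show "\<forall>s\<in>M - {a}. \<forall>t\<in>{v}. {s, t} \<notin> snd G" using M_non_adj by auto
    qed
    have "finite M" using G M_sub(1) finite_subset by (auto simp: is_graph_def)
    then have "card ((M - {a}) \<union> {v}) = card M" using a M_sub(2)
      by (metis Un_insert_right sup_bot_right card_insert_disjoint finite_Diff card_Suc_Diff1 DiffE)
    moreover have "a \<in> fst G" using a M_sub(1) by blast
    ultimately show ?thesis
      using card_le_lam[OF G local_comp_in_lc_orbit indep] card_M unfolding M_def by simp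
  qed
qed

lemma nine_le_card_imp_three_le_lam:
  assumes G: "is_graph G" and card_V: "9 \<le> card (fst G)"
  shows "3 \<le> lam G"
proof -
  obtain v where v: "v \<in> fst G" using card_V by (metis all_not_in_conv card.empty not_numeral_le_zero)
  let ?N = "nbhd G v" and ?M = "fst G - insert v (nbhd G v)"
  have "finite (?N \<union> ?M)" using G by (auto simp: is_graph_def nbhd_def)
  have "fst G = insert v (?N \<union> ?M)" using v by (auto simp: nbhd_def)
  then have "card (fst G) = card (insert v (?N \<union> ?M))" by (rule arg_cong)
  also have "\<dots> \<le> Suc (card (?N \<union> ?M))" using \<open>finite (?N \<union> ?M)\<close> by (simp add: card_insert_if)
  also have "\<dots> \<le> Suc (card ?N + card ?M)" using card_Un_le by simp
  finally consider "(2 + 2) choose 2 \<le> card ?N" | "3 \<le> card ?M"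
    using card_V by (simp add: numeral_eq_Suc) linarith
  then show ?thesis
    using central_binomial_le_card_nbhd_imp_le_lam[OF G v, of 2]
      three_le_card_non_nbhd_imp_three_le_lam[OF G v] by cases simp_all
qed

theorem mainTheorem2:
  fixes k :: nat
  assumes "k \<ge> 1"
  shows "(\<forall>G :: 'a graph. is_graph G \<and> card (fst G) \<ge> ramsey k (k + 1) \<longrightarrow> lam G \<ge> k)
       \<and> (\<forall>n \<ge> ramsey k (k + 1). Lam n \<ge> k)
       \<and> (\<forall>n \<ge> 9. Lam n \<ge> 3)"
proof (intro conjI allI impI)
  fix G :: "'a graph"
  assume "is_graph G \<and> card (fst G) \<ge> ramsey k (k + 1)"
  then show "lam G \<ge> k" using le_lam_if_ramsey_le_card[OF assms] by blast
next
  fix n assume "n \<ge> ramsey k (k + 1)"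
  then show "Lam n \<ge> k" by (intro le_LamI le_lam_if_ramsey_le_card[OF assms]) simp_all
next
  fix n :: nat assume "n \<ge> 9"
  then show "Lam n \<ge> 3" by (intro le_LamI nine_le_card_imp_three_le_lam) simp_all
qed

end
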